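(* Let $H$ be a real Hilbert space, $A:H\to2^H$ maximal monotone with $\mathrm{zer}A\ne\emptyset$, $(\gamma_n)$ a sequence in $(0,\infty)$ with $\sum_n\gamma_n^2=\infty$ and rate of divergence $\theta$, $x_0\in H$, $x_{n+1}=J_{\gamma_nA}x_n$, and $b>0$ with $b\ge\|x_0-p\|$ for some $p\in\mathrm{zer}A$. For $k\in\mathbb{N}$ let $m_k=\max_{0\le i\le k}\gamma_i$ and $M_k=\lceil(k+1)(2+m_k)\rceil-1$. Then for every $k\in\mathbb{N}$ there exists $N\le\Phi(k,m_k,\theta,b):=\theta\big(\lceil b^2(M_k+1)^2\rceil\big)\lceil b^2(M_k+1)^2\rceil-1$ such that $\|x_N-J_{\gamma_iA}x_N\|\le\frac1{k+1}$ for all $i\le k$ (i.e. $x_N\in AF_k$).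
   Context: $J_{\gamma A}:=(Id+\gamma A)^{-1}$ is the resolvent of $\gamma A$. $AF_k:=\bigcap_{i\le k}\{x\in H\mid\|x-J_{\gamma_iA}x\|\le\frac1{k+1}\}$. A rate of divergence for $\sum\gamma_n^2$ is $\theta:\mathbb{N}\to\mathbb{N}$ with $\sum_{i=0}^{\theta(n)}\gamma_i^2\ge n$ for all $n$. *)

theory Defs
  imports "HOL-Analysis.Analysis"
begin

definition monotone_op :: "('a::real_inner \<Rightarrow> 'a set) \<Rightarrow> bool" where
  "monotone_op A \<longleftrightarrow>
     (\<forall>x y u v. u \<in> A x \<longrightarrow> v \<in> A y \<longrightarrow> 0 \<le> inner (x - y) (u - v))"

definition maximal_monotone :: "('a::real_inner \<Rightarrow> 'a set) \<Rightarrow> bool" where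
  "maximal_monotone A \<longleftrightarrow> monotone_op A \<and>
     (\<forall>B. monotone_op B \<longrightarrow> (\<forall>x. A x \<subseteq> B x) \<longrightarrow> B = A)"

definition zer :: "('a::real_vector \<Rightarrow> 'a set) \<Rightarrow> 'a set" where
  "zer A = {x. 0 \<in> A x}"

text \<open>Resolvent J_{gamma A} = (Id + gamma A)^{-1}: J x is the y with x \<in> y + gamma A y.\<close>
definition resolvent :: "real \<Rightarrow> ('a::real_vector \<Rightarrow> 'a set) \<Rightarrow> 'a \<Rightarrow> 'a" where
  "resolvent \<gamma> A x = (THE y. \<exists>u \<in> A y. x = y + \<gamma> *\<^sub>R u)"

definition AF :: "(nat \<Rightarrow> real) \<Rightarrow> ('a::real_normed_vector \<Rightarrow> 'a set) \<Rightarrow> nat \<Rightarrow> 'a set" where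
  "AF \<gamma> A k = (\<Inter>i\<in>{..k}. {x. norm (x - resolvent (\<gamma> i) A x) \<le> 1 / (real k + 1)})"

definition rate_of_divergence :: "(nat \<Rightarrow> real) \<Rightarrow> (nat \<Rightarrow> nat) \<Rightarrow> bool" where
  "rate_of_divergence \<gamma> \<theta> \<longleftrightarrow> (\<forall>n. (\<Sum>i\<le>\<theta> n. (\<gamma> i)\<^sup>2) \<ge> real n)"

definition m_seq :: "(nat \<Rightarrow> real) \<Rightarrow> nat \<Rightarrow> real" where
  "m_seq \<gamma> k = Max (\<gamma> ` {..k})"

definition M_seq :: "real \<Rightarrow> nat \<Rightarrow> nat" where
  "M_seq m k = nat (\<lceil>(real k + 1) * (2 + m)\<rceil>) - 1"

definition Phi :: "nat \<Rightarrow> real \<Rightarrow> (nat \<Rightarrow> nat) \<Rightarrow> real \<Rightarrow> nat" where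
  "Phi k m \<theta> b = (let c = nat \<lceil>b\<^sup>2 * (real (M_seq m k) + 1)\<^sup>2\<rceil> in \<theta> c * c - 1)"

end

theory Submission
  imports Defs
begin

(* The resolvents are single-valued and everywhere defined by Minty's theorem, which follows from
   the Debrunner-Flor lemma: for a monotone set of pairs (a, v) there is a y with
   <y - a, y + v> <= 0 for all of them.  For finitely many pairs this is a minimisation over a
   convex hull; in general each condition says that y lies in a closed ball, and closed convex
   sets in a Hilbert space with the finite intersection property and a bounded member meet.

   For the iteration write x n = x (n+1) + \<gamma> n u n with u n \<in> A (x (n+1)).  Monotonicity gives
   |x (n+1) - p|^2 + \<gamma> n^2 |u n|^2 <= |x n - p|^2 and that |u n| decreases, hence
   |u n|^2 * (\<Sum>i\<le>n. \<gamma> i^2) <= b^2, while the residual of x (n+1) for J_{\<gamma> i A} is at most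
   \<gamma> i |u n| <= m_k |u n|.  Taking n = \<theta> c with c = \<lceil>b^2 (M_k + 1)^2\<rceil> makes every residual
   with i <= k at most 1/(k+1), and n + 1 <= \<Phi>.  If b <= 1/(k+1) already x 0 works. *)

section \<open>Closed convex sets with the finite intersection property\<close>

lemma convex_near_infdist_dist_sq_le:
  fixes C :: "'a::real_inner set"
  assumes "convex C" and "y \<in> C" and "z \<in> C" and "r - e \<le> infdist x C"
    and "dist x y \<le> r + e" and "dist x z \<le> r + e"
  shows "(dist y z)\<^sup>2 \<le> 16 * e * (r + e)"
proof -
  have "(1/2) *\<^sub>R y + (1/2) *\<^sub>R z \<in> C"
    using assms(1-3) by (rule convexD) auto
  then have "infdist x C \<le> dist x ((1/2) *\<^sub>R y + (1/2) *\<^sub>R z)"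
    by (rule infdist_le)
  also have "\<dots> = norm ((1/2) *\<^sub>R ((x - y) + (x - z)))"
  proof -
    have "(1/2) *\<^sub>R ((x - y) + (x - z)) = (1/2) *\<^sub>R (x + x) - ((1/2) *\<^sub>R y + (1/2) *\<^sub>R z)"
      by (simp add: algebra_simps)
    then show ?thesis by (simp add: dist_norm)
  qed
  finally have mid: "2 * (r - e) \<le> norm ((x - y) + (x - z))"
    using assms(4) by simp
  have e0: "0 \<le> e"
    using assms(4,5) infdist_le[OF assms(2), of x] by linarith
  have "(dist x y)\<^sup>2 \<le> (r + e)\<^sup>2" "(dist x z)\<^sup>2 \<le> (r + e)\<^sup>2"
    using assms(5,6) by (simp_all add: power_mono)
  moreover have "(dist y z)\<^sup>2 = 2 * (dist x y)\<^sup>2 + 2 * (dist x z)\<^sup>2 - (norm ((x - y) + (x - z)))\<^sup>2"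
    unfolding dist_norm power2_norm_eq_inner
    by (simp add: inner_add_left inner_add_right inner_diff_left inner_diff_right inner_commute)
  ultimately have le: "(dist y z)\<^sup>2 \<le> 4 * (r + e)\<^sup>2 - (norm ((x - y) + (x - z)))\<^sup>2"
    by linarith
  show ?thesis
  proof (cases "e \<le> r")
    case True
    then have "(2 * (r - e))\<^sup>2 \<le> (norm ((x - y) + (x - z)))\<^sup>2"
      using mid by (intro power_mono) auto
    with le have "(dist y z)\<^sup>2 \<le> 16 * e * r"
      by (simp add: power2_eq_square algebra_simps)
    moreover have "16 * e * r \<le> 16 * e * (r + e)"
      using e0 by (simp add: mult_left_mono)
    ultimately show ?thesis by linarith
  next
    case False
    have "0 \<le> r + e"
      using assms(5) zero_le_dist[of x y] by linarith
    then have "(r + e) * (r + e) \<le> (4 * e) * (r + e)"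
      using False e0 by (intro mult_right_mono) auto
    then have "4 * (r + e)\<^sup>2 \<le> 16 * e * (r + e)"
      by (simp add: power2_eq_square)
    with le show ?thesis
      using zero_le_power2[of "norm ((x - y) + (x - z))"] by linarith
  qed
qed

lemma Cauchy_of_dist_le_null:
  fixes X :: "nat \<Rightarrow> 'a::metric_space"
  assumes "\<And>m n. m \<le> n \<Longrightarrow> dist (X m) (X n) \<le> B m" and "B \<longlonglongrightarrow> 0"
  shows "Cauchy X"
proof (rule metric_CauchyI)
  fix e :: real assume "0 < e"
  then have "eventually (\<lambda>m. B m < e / 2) sequentially"
    using order_tendstoD(2)[OF assms(2), of "e / 2"] by simp
  then obtain M where M: "\<And>m. M \<le> m \<Longrightarrow> B m < e / 2"
    unfolding eventually_sequentially by blast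
  have "dist (X m) (X M) < e / 2" if "M \<le> m" for m
    using assms(1)[OF that] M[OF order_refl] by (simp add: dist_commute)
  then have "\<forall>m\<ge>M. \<forall>n\<ge>M. dist (X m) (X n) < e"
    using dist_triangle_half_l by blast
  then show "\<exists>M. \<forall>m\<ge>M. \<forall>n\<ge>M. dist (X m) (X n) < e" by blast
qed

lemma infdist_attains_near:
  assumes "A \<noteq> {}" and "0 < e"
  shows "\<exists>y\<in>A. dist x y < infdist x A + e"
proof -
  have "(INF y\<in>A. dist x y) < infdist x A + e"
    using assms by (simp add: infdist_notempty)
  moreover have "bdd_below ((\<lambda>y. dist x y) ` A)"
    by (rule bdd_belowI2[of _ 0]) simp
  ultimately show ?thesis
    using assms(1) by (simp add: cINF_less_iff)
qed

lemma decseq_convex_near_min_norm_converge: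
  fixes C :: "nat \<Rightarrow> 'a::{real_inner,complete_space} set"
  assumes "decseq C" and "\<And>n. convex (C n)" and "\<And>n. C n \<noteq> {}"
    and "\<And>n. infdist 0 (C n) \<le> r" and "\<And>n. r - e n \<le> infdist 0 (C n)"
    and "decseq e" and "e \<longlonglongrightarrow> 0" and "\<And>n. 0 < e n"
  obtains L where "\<And>z. (\<And>n. z n \<in> C n) \<Longrightarrow> (\<And>n. norm (z n) \<le> r + e n) \<Longrightarrow> z \<longlonglongrightarrow> L"
proof -
  define B where "B n = 4 * sqrt (e n * (r + e n))" for n
  have "B \<longlonglongrightarrow> 4 * sqrt (0 * (r + 0))"
    unfolding B_def using assms(7) by (intro tendsto_intros)
  then have B_null: "B \<longlonglongrightarrow> 0" by simp
  have close: "dist y z \<le> B n"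
    if "y \<in> C n" "norm y \<le> r + e n" "z \<in> C n" "norm z \<le> r + e n" for n y z
  proof -
    have "(dist y z)\<^sup>2 \<le> 16 * e n * (r + e n)"
      using assms(2,5) that by (intro convex_near_infdist_dist_sq_le[of _ _ _ _ _ 0]) auto
    then have "dist y z \<le> sqrt (16 * (e n * (r + e n)))"
      by (simp add: real_le_rsqrt mult.assoc)
    then show ?thesis by (simp add: B_def real_sqrt_mult)
  qed
  have "\<forall>n. \<exists>y. y \<in> C n \<and> norm y \<le> r + e n"
  proof
    fix n
    obtain y where "y \<in> C n" "dist 0 y < infdist 0 (C n) + e n"
      using infdist_attains_near[OF assms(3,8)] by blast
    then show "\<exists>y. y \<in> C n \<and> norm y \<le> r + e n"
      using assms(4)[of n] by (intro exI[of _ y]) auto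
  qed
  then obtain x where x: "\<And>n. x n \<in> C n" "\<And>n. norm (x n) \<le> r + e n"
    by metis
  have "dist (x m) (x n) \<le> B m" if "m \<le> n" for m n
  proof (rule close[OF x(1,2)])
    show "x n \<in> C m" using x(1)[of n] decseqD[OF assms(1) that] by blast
    show "norm (x n) \<le> r + e m" using x(2)[of n] decseqD[OF assms(6) that] by linarith
  qed
  then have "Cauchy x"
    using B_null by (rule Cauchy_of_dist_le_null)
  then obtain L where L: "x \<longlonglongrightarrow> L"
    unfolding Cauchy_convergent_iff convergent_def by blast
  have "z \<longlonglongrightarrow> L" if "\<And>n. z n \<in> C n" "\<And>n. norm (z n) \<le> r + e n" for z
  proof -
    have "norm (z n - x n) \<le> B n" for n
      using close[OF that(1,2) x(1,2)] by (simp add: dist_norm)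
    then have "(\<lambda>n. z n - x n) \<longlonglongrightarrow> 0"
      by (intro Lim_null_comparison[OF always_eventually B_null]) simp
    then show ?thesis
      using L by (rule Lim_transform[rotated])
  qed
  then show ?thesis by (rule that)
qed

lemma incseq_finite_subsets_approx_SUP:
  fixes f :: "'b set \<Rightarrow> real"
  assumes bdd: "bdd_above (f ` {\<F>. finite \<F> \<and> \<F> \<subseteq> S})"
    and mono: "\<And>\<F> \<G>. \<F> \<subseteq> \<G> \<Longrightarrow> finite \<G> \<Longrightarrow> \<G> \<subseteq> S \<Longrightarrow> f \<F> \<le> f \<G>"
    and "\<And>n. 0 < e n"
  obtains \<G> where "incseq \<G>" "\<And>n. finite (\<G> n)" "\<And>n. \<G> n \<subseteq> S"
    "\<And>n. (SUP \<F>\<in>{\<F>. finite \<F> \<and> \<F> \<subseteq> S}. f \<F>) - e n < f (\<G> n)"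
proof -
  let ?Fin = "{\<F>. finite \<F> \<and> \<F> \<subseteq> S}"
  have "\<exists>\<F>\<in>?Fin. (SUP \<F>\<in>?Fin. f \<F>) - e n < f \<F>" for n
  proof -
    have "{} \<in> ?Fin" by simp
    moreover have "(SUP \<F>\<in>?Fin. f \<F>) - e n < (SUP \<F>\<in>?Fin. f \<F>)"
      using assms(3)[of n] by simp
    ultimately show ?thesis
      using less_cSUP_iff[of ?Fin f] bdd by blast
  qed
  then obtain \<F> where \<F>: "\<And>n. \<F> n \<in> ?Fin" "\<And>n. (SUP \<F>\<in>?Fin. f \<F>) - e n < f (\<F> n)"
    by metis
  show ?thesis
  proof
    show "incseq (\<lambda>n. \<Union>j\<le>n. \<F> j)"
      by (intro incseq_SucI) (auto simp: atMost_Suc)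
    show "finite (\<Union>j\<le>n. \<F> j)" "(\<Union>j\<le>n. \<F> j) \<subseteq> S" for n
      using \<F>(1) by auto
    then show "(SUP \<F>\<in>?Fin. f \<F>) - e n < f (\<Union>j\<le>n. \<F> j)" for n
      using \<F>(2)[of n] mono[of "\<F> n" "\<Union>j\<le>n. \<F> j"] by fastforce
  qed
qed

lemma finite_subfamilies_infdist_approx_SUP:
  fixes \<K> :: "'a::real_normed_vector set set"
  assumes "K0 \<in> \<K>" and "bounded K0"
    and fip: "\<And>\<F>. finite \<F> \<Longrightarrow> \<F> \<subseteq> \<K> \<Longrightarrow> \<Inter>\<F> \<noteq> {}"
    and "\<And>n. 0 < e n"
  obtains \<G> r where "incseq \<G>" "\<And>n. finite (\<G> n)" "\<And>n. \<G> n \<subseteq> \<K>"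
    "\<And>n. r - e n < infdist 0 (\<Inter>(\<G> n))"
    "\<And>\<F>. finite \<F> \<Longrightarrow> \<F> \<subseteq> \<K> \<Longrightarrow> infdist 0 (\<Inter>\<F>) \<le> r"
proof -
  define Fin where "Fin = {\<F>. finite \<F> \<and> \<F> \<subseteq> \<K>}"
  define \<delta> where "\<delta> \<F> = infdist 0 (\<Inter>\<F>)" for \<F> :: "'a set set"
  have \<delta>_mono: "\<delta> \<F> \<le> \<delta> \<G>" if "\<F> \<subseteq> \<G>" "finite \<G>" "\<G> \<subseteq> \<K>" for \<F> \<G>
    unfolding \<delta>_def using that fip by (intro infdist_mono) auto
  obtain R where R: "\<And>y. y \<in> K0 \<Longrightarrow> norm y \<le> R"
    using \<open>bounded K0\<close> by (auto simp: bounded_iff)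
  have "\<delta> \<F> \<le> R" if \<F>: "\<F> \<in> Fin" for \<F>
  proof -
    obtain y where y: "y \<in> \<Inter>(insert K0 \<F>)"
      using fip[of "insert K0 \<F>"] \<F> \<open>K0 \<in> \<K>\<close> by (auto simp: Fin_def)
    have "\<delta> \<F> \<le> \<delta> (insert K0 \<F>)"
      using \<F> \<open>K0 \<in> \<K>\<close> by (intro \<delta>_mono) (auto simp: Fin_def)
    also have "\<dots> \<le> norm y"
      unfolding \<delta>_def using y by (metis dist_0_norm infdist_le)
    finally show ?thesis using R y by force
  qed
  then have bdd: "bdd_above (\<delta> ` Fin)"
    by (intro bdd_aboveI2) auto
  obtain \<G> where \<G>: "incseq \<G>" "\<And>n. finite (\<G> n)" "\<And>n. \<G> n \<subseteq> \<K>"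
    "\<And>n. (SUP \<F>\<in>Fin. \<delta> \<F>) - e n < \<delta> (\<G> n)"
    using incseq_finite_subsets_approx_SUP[of \<delta> \<K> e] bdd \<delta>_mono assms(4)
    unfolding Fin_def by blast
  show ?thesis
  proof (rule that[OF \<G>(1-3)])
    show "(SUP \<F>\<in>Fin. \<delta> \<F>) - e n < infdist 0 (\<Inter>(\<G> n))" for n
      using \<G>(4)[of n] by (simp add: \<delta>_def)
    show "infdist 0 (\<Inter>\<F>) \<le> (SUP \<F>\<in>Fin. \<delta> \<F>)" if "finite \<F>" "\<F> \<subseteq> \<K>" for \<F>
      using bdd that unfolding \<delta>_def by (intro cSUP_upper2[of _ _ \<F>]) (auto simp: Fin_def)
  qed
qed

(* This replaces weak compactness: along finite subfamilies whose intersections have nearly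
   maximal distance r from 0, points of nearly minimal norm form a Cauchy sequence (parallelogram
   law), and its limit lies in every member. *)
lemma Inter_closed_convex_nonempty:
  fixes \<K> :: "'a::{real_inner,complete_space} set set"
  assumes closed: "\<And>K. K \<in> \<K> \<Longrightarrow> closed K" and convex: "\<And>K. K \<in> \<K> \<Longrightarrow> convex K"
    and "K0 \<in> \<K>" and "bounded K0"
    and fip: "\<And>\<F>. finite \<F> \<Longrightarrow> \<F> \<subseteq> \<K> \<Longrightarrow> \<Inter>\<F> \<noteq> {}"
  shows "\<Inter>\<K> \<noteq> {}"
proof -
  define e where "e n = inverse (real (Suc n))" for n
  have e_pos: "0 < e n" for n
    by (simp add: e_def)
  obtain r \<G> where \<G>: "incseq \<G>" "\<And>n. finite (\<G> n)" "\<And>n. \<G> n \<subseteq> \<K>"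
      "\<And>n. r - e n < infdist 0 (\<Inter>(\<G> n))"
    and le_r: "\<And>\<F>. finite \<F> \<Longrightarrow> \<F> \<subseteq> \<K> \<Longrightarrow> infdist 0 (\<Inter>\<F>) \<le> r"
    using finite_subfamilies_infdist_approx_SUP[where e = e, OF assms(3,4) fip e_pos] by blast
  have near: "\<exists>y\<in>\<Inter>\<F>. norm y \<le> r + e n" if \<F>: "finite \<F>" "\<F> \<subseteq> \<K>" for \<F> n
  proof -
    obtain y where "y \<in> \<Inter>\<F>" "dist 0 y < infdist 0 (\<Inter>\<F>) + e n"
      using infdist_attains_near[OF fip[OF \<F>] e_pos] by blast
    then show ?thesis using le_r[OF \<F>] by (intro bexI[of _ y]) auto
  qed
  have "decseq (\<lambda>n. \<Inter>(\<G> n))"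
    using \<G>(1) by (auto simp: incseq_def decseq_def)
  moreover have "convex (\<Inter>(\<G> n))" for n
    using convex \<G>(3)[of n] by (intro convex_Inter) auto
  moreover have "decseq e"
    by (intro decseq_SucI) (simp add: e_def field_simps)
  moreover have "e \<longlonglongrightarrow> 0"
    unfolding e_def by (rule LIMSEQ_inverse_real_of_nat)
  ultimately obtain L
    where L: "\<And>z. (\<And>n. z n \<in> \<Inter>(\<G> n)) \<Longrightarrow> (\<And>n. norm (z n) \<le> r + e n) \<Longrightarrow> z \<longlonglongrightarrow> L"
    using decseq_convex_near_min_norm_converge[of "\<lambda>n. \<Inter>(\<G> n)" r e] fip[OF \<G>(2,3)]
      le_r[OF \<G>(2,3)] \<G>(4) e_pos by (meson less_imp_le)
  have "L \<in> K" if K: "K \<in> \<K>" for K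
  proof -
    have "\<forall>n. \<exists>y. y \<in> \<Inter>(insert K (\<G> n)) \<and> norm y \<le> r + e n"
      using near \<G>(2,3) K by (metis finite_insert insert_subset)
    then obtain z where z: "\<And>n. z n \<in> \<Inter>(insert K (\<G> n))" "\<And>n. norm (z n) \<le> r + e n"
      by metis
    have "z \<longlonglongrightarrow> L"
      using z by (intro L) auto
    moreover have "z n \<in> K" for n
      using z(1)[of n] by blast
    ultimately show ?thesis
      by (rule closed_sequentially[OF closed[OF K], rotated])
  qed
  then show ?thesis by blast
qed

section \<open>The Debrunner-Flor lemma\<close>

definition monotone_set :: "('a::real_inner \<times> 'a) set \<Rightarrow> bool" where
  "monotone_set G \<longleftrightarrow> (\<forall>(x, u)\<in>G. \<forall>(y, v)\<in>G. 0 \<le> inner (x - y) (u - v))"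

lemma monotone_setD:
  "monotone_set G \<Longrightarrow> (x, u) \<in> G \<Longrightarrow> (y, v) \<in> G \<Longrightarrow> 0 \<le> inner (x - y) (u - v)"
  unfolding monotone_set_def by blast

lemma monotone_set_subset: "monotone_set G \<Longrightarrow> F \<subseteq> G \<Longrightarrow> monotone_set F"
  unfolding monotone_set_def by blast

lemma inner_diff_add_le_0_iff_mem_cball:
  fixes y a v :: "'a::real_inner"
  shows "inner (y - a) (y + v) \<le> 0 \<longleftrightarrow> y \<in> cball ((1/2) *\<^sub>R (a - v)) (norm (a + v) / 2)"
proof -
  have "inner (y - a) (y + v) = (dist ((1/2) *\<^sub>R (a - v)) y)\<^sup>2 - (norm (a + v) / 2)\<^sup>2"
    unfolding dist_norm power2_norm_eq_inner power_divide
    by (simp add: inner_add_left inner_add_right inner_diff_left inner_diff_right inner_commute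
        field_simps)
  then show ?thesis
    by (simp add: abs_le_square_iff[symmetric])
qed

lemma inner_convex_combination_le:
  fixes a v :: "'i \<Rightarrow> 'a::real_inner"
  assumes "finite I" and "\<And>i. i \<in> I \<Longrightarrow> 0 \<le> u i" and "sum u I = 1"
    and mono: "\<And>i j. i \<in> I \<Longrightarrow> j \<in> I \<Longrightarrow> 0 \<le> inner (a i - a j) (v i - v j)"
  shows "inner (\<Sum>i\<in>I. u i *\<^sub>R a i) (\<Sum>i\<in>I. u i *\<^sub>R v i) \<le> (\<Sum>i\<in>I. u i * inner (a i) (v i))"
proof -
  let ?S = "\<Sum>i\<in>I. u i * inner (a i) (v i)" and ?P = "inner (\<Sum>i\<in>I. u i *\<^sub>R a i) (\<Sum>i\<in>I. u i *\<^sub>R v i)"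
  have "0 \<le> (\<Sum>i\<in>I. \<Sum>j\<in>I. u i * u j * inner (a i - a j) (v i - v j))"
    using assms(2) mono by (intro sum_nonneg mult_nonneg_nonneg) auto
  also have "\<dots> = (\<Sum>i\<in>I. \<Sum>j\<in>I. u i * u j * inner (a i) (v i) + u i * u j * inner (a j) (v j)
       - u i * u j * inner (a i) (v j) - u i * u j * inner (a j) (v i))"
    by (simp add: inner_diff_left inner_diff_right algebra_simps)
  also have "\<dots> = 2 * ?S - 2 * ?P"
  proof -
    have "(\<Sum>i\<in>I. \<Sum>j\<in>I. u i * u j * inner (a i) (v i)) = ?S"
      by (simp add: sum_distrib_left[symmetric] sum_distrib_right[symmetric] assms(3)
          mult.commute mult.left_commute)
    moreover have "(\<Sum>i\<in>I. \<Sum>j\<in>I. u i * u j * inner (a j) (v j)) = ?S"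
      by (simp add: sum_distrib_left[symmetric] sum_distrib_right[symmetric] assms(3) mult.assoc)
    moreover have "(\<Sum>i\<in>I. \<Sum>j\<in>I. u i * u j * inner (a i) (v j)) = ?P"
      by (subst sum.swap) (simp add: inner_sum_left inner_sum_right sum_distrib_left algebra_simps)
    moreover have "(\<Sum>i\<in>I. \<Sum>j\<in>I. u i * u j * inner (a j) (v i)) = ?P"
      by (simp add: inner_sum_left inner_sum_right sum_distrib_left algebra_simps)
    ultimately show ?thesis
      by (simp add: sum.distrib sum_subtractf)
  qed
  finally show ?thesis by simp
qed

lemma nonneg_if_small_quadratic_nonneg:
  fixes D E :: real
  assumes "0 \<le> E" and "\<And>t. 0 < t \<Longrightarrow> t \<le> 1 \<Longrightarrow> 0 \<le> t * D + t\<^sup>2 * E"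
  shows "0 \<le> D"
proof (rule ccontr)
  assume "\<not> 0 \<le> D"
  define t where "t = min 1 (- D / (2 * (E + 1)))"
  have t: "0 < t" "t \<le> 1"
    using \<open>\<not> 0 \<le> D\<close> assms(1) by (auto simp: t_def divide_neg_pos)
  have "t \<le> - D / (2 * (E + 1))"
    by (simp add: t_def)
  then have "t * (2 * (E + 1)) \<le> - D"
    using assms(1) by (simp add: field_simps)
  moreover have "t * E < t * (2 * (E + 1))"
    using t assms(1) by (intro mult_strict_left_mono) auto
  ultimately have "D + t * E < 0"
    by linarith
  then have "t * (D + t * E) < 0"
    using t by (simp add: mult_pos_neg)
  with assms(2)[OF t] show False
    by (simp add: power2_eq_square algebra_simps)
qed

lemma inner_le_of_mem_convex_hull_lift:
  fixes F :: "('a::real_inner \<times> 'a) set"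
  assumes "finite F" and "monotone_set F"
    and "z \<in> convex hull ((\<lambda>(a, v). (a, v, inner a v)) ` F)"
  shows "inner (fst z) (fst (snd z)) \<le> snd (snd z)"
proof -
  let ?T = "(\<lambda>(a, v). (a, v, inner a v)) ` F"
  obtain u where u: "\<forall>x\<in>?T. 0 \<le> u x" "sum u ?T = 1" "(\<Sum>x\<in>?T. u x *\<^sub>R x) = z"
    using assms(3) unfolding convex_hull_finite[OF finite_imageI[OF assms(1)]] by blast
  have "(\<Sum>x\<in>?T. u x * snd (snd x)) = (\<Sum>x\<in>?T. u x * inner (fst x) (fst (snd x)))"
    by (rule sum.cong) auto
  then have "snd (snd z) = (\<Sum>x\<in>?T. u x * inner (fst x) (fst (snd x)))"
    using u(3)[symmetric] by (simp add: snd_sum)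
  moreover have "fst z = (\<Sum>x\<in>?T. u x *\<^sub>R fst x)" "fst (snd z) = (\<Sum>x\<in>?T. u x *\<^sub>R fst (snd x))"
    using u(3)[symmetric] by (simp_all add: fst_sum snd_sum)
  moreover have "inner (\<Sum>x\<in>?T. u x *\<^sub>R fst x) (\<Sum>x\<in>?T. u x *\<^sub>R fst (snd x))
      \<le> (\<Sum>x\<in>?T. u x * inner (fst x) (fst (snd x)))"
  proof (rule inner_convex_combination_le)
    show "0 \<le> inner (fst x - fst y) (fst (snd x) - fst (snd y))" if "x \<in> ?T" "y \<in> ?T" for x y
      using that monotone_setD[OF assms(2)] by auto
  qed (use u(1,2) assms(1) in auto)
  ultimately show ?thesis
    by simp
qed

lemma lift_minimiser_common_point:
  fixes K :: "('a::real_inner \<times> 'a \<times> real) set"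
  assumes "convex K" and "(a0, v0, s) \<in> K" and "(a, v, inner a v) \<in> K"
    and min: "\<And>a' v' s'. (a', v', s') \<in> K \<Longrightarrow>
      (norm (a0 - v0))\<^sup>2 / 4 + s \<le> (norm (a' - v'))\<^sup>2 / 4 + s'"
    and "inner a0 v0 \<le> s"
  shows "inner ((1/2) *\<^sub>R (a0 - v0) - a) ((1/2) *\<^sub>R (a0 - v0) + v) \<le> 0"
proof -
  define w where "w = a0 - v0"
  define d where "d = (a - v) - w"
  define D where "D = inner w d / 2 + inner a v - s"
  define E where "E = (norm d)\<^sup>2 / 4"
  have "0 \<le> D"
  proof (rule nonneg_if_small_quadratic_nonneg)
    show "0 \<le> E" by (simp add: E_def)
    fix t :: real assume t: "0 < t" "t \<le> 1"
    have "(1 - t) *\<^sub>R (a0, v0, s) + t *\<^sub>R (a, v, inner a v) \<in> K"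
      using assms(1-3) t by (intro convexD) auto
    moreover have "(1 - t) *\<^sub>R (a0, v0, s) + t *\<^sub>R (a, v, inner a v)
        = (a0 + t *\<^sub>R (a - a0), v0 + t *\<^sub>R (v - v0), s + t * (inner a v - s))"
      by (simp add: algebra_simps)
    moreover have "(a0 + t *\<^sub>R (a - a0)) - (v0 + t *\<^sub>R (v - v0)) = w + t *\<^sub>R d"
      by (simp add: w_def d_def algebra_simps)
    ultimately have "(norm w)\<^sup>2 / 4 + s \<le> (norm (w + t *\<^sub>R d))\<^sup>2 / 4 + (s + t * (inner a v - s))"
      using min unfolding w_def by metis
    moreover have "(norm (w + t *\<^sub>R d))\<^sup>2 = (norm w)\<^sup>2 + 2 * t * inner w d + t\<^sup>2 * (norm d)\<^sup>2"
      unfolding power2_norm_eq_inner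
      by (simp add: inner_add_left inner_add_right inner_commute power2_eq_square algebra_simps)
    ultimately show "0 \<le> t * D + t\<^sup>2 * E"
      by (simp add: D_def E_def field_simps)
  qed
  have "(norm (a0 + v0))\<^sup>2 / 4 = (norm w)\<^sup>2 / 4 + inner a0 v0"
    unfolding w_def power2_norm_eq_inner
    by (simp add: inner_add_left inner_add_right inner_diff_left inner_diff_right inner_commute
        field_simps)
  then have "0 \<le> (norm w)\<^sup>2 / 4 + s"
    using assms(5) zero_le_power2[of "norm (a0 + v0)"] by linarith
  moreover have "inner ((1/2) *\<^sub>R w - a) ((1/2) *\<^sub>R w + v) \<le> - ((norm w)\<^sup>2 / 4 + s)"
    using \<open>0 \<le> D\<close> unfolding power2_norm_eq_inner D_def d_def
    by (simp add: inner_add_left inner_add_right inner_diff_left inner_diff_right inner_commute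
        field_simps)
  ultimately show ?thesis
    by (simp add: w_def)
qed

(* Minimising |a - v|^2 / 4 + s over the convex hull of the lifted points (a, v, <a, v>) yields
   the common point. *)
lemma finite_monotone_set_common_point:
  fixes F :: "('a::real_inner \<times> 'a) set"
  assumes "finite F" and "monotone_set F"
  shows "\<exists>y. \<forall>(a, v)\<in>F. inner (y - a) (y + v) \<le> 0"
proof (cases "F = {}")
  case False
  define K where "K = convex hull ((\<lambda>(a, v). (a, v, inner a v)) ` F)"
  define q :: "'a \<times> 'a \<times> real \<Rightarrow> real"
    where "q z = (norm (fst z - fst (snd z)))\<^sup>2 / 4 + snd (snd z)" for z
  have "compact K"
    unfolding K_def using assms(1) by (intro finite_imp_compact_convex_hull) simp
  moreover have "K \<noteq> {}"
    using False by (simp add: K_def)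
  moreover have "continuous_on K q"
    unfolding q_def by (intro continuous_intros) auto
  ultimately obtain z where "z \<in> K" and z_min: "\<And>z'. z' \<in> K \<Longrightarrow> q z \<le> q z'"
    using continuous_attains_inf by metis
  obtain a0 v0 s where z: "z = (a0, v0, s)"
    by (cases z) auto
  have "inner ((1/2) *\<^sub>R (a0 - v0) - a) ((1/2) *\<^sub>R (a0 - v0) + v) \<le> 0" if "(a, v) \<in> F" for a v
  proof (rule lift_minimiser_common_point)
    show "convex K" "(a0, v0, s) \<in> K"
      using \<open>z \<in> K\<close> by (simp_all add: K_def z)
    show "(a, v, inner a v) \<in> K"
      using that unfolding K_def by (intro hull_inc) force
    show "(norm (a0 - v0))\<^sup>2 / 4 + s \<le> (norm (a' - v'))\<^sup>2 / 4 + s'"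
      if "(a', v', s') \<in> K" for a' v' s'
      using z_min[OF that] by (simp add: q_def z)
    show "inner a0 v0 \<le> s"
      using inner_le_of_mem_convex_hull_lift[OF assms, of z] \<open>z \<in> K\<close> by (simp add: z K_def)
  qed
  then show ?thesis by blast
qed simp

lemma monotone_set_common_point:
  fixes G :: "('a::{real_inner,complete_space} \<times> 'a) set"
  assumes "monotone_set G"
  shows "\<exists>y. \<forall>(a, v)\<in>G. inner (y - a) (y + v) \<le> 0"
proof (cases "G = {}")
  case False
  define ball_of :: "'a \<times> 'a \<Rightarrow> 'a set"
    where "ball_of = (\<lambda>(a, v). cball ((1/2) *\<^sub>R (a - v)) (norm (a + v) / 2))"
  have mem_ball_of: "y \<in> ball_of p \<longleftrightarrow> (case p of (a, v) \<Rightarrow> inner (y - a) (y + v) \<le> 0)" for y p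
    by (simp add: ball_of_def inner_diff_add_le_0_iff_mem_cball split: prod.split)
  have "\<Inter>(ball_of ` G) \<noteq> {}"
  proof (rule Inter_closed_convex_nonempty)
    show "closed K" "convex K" if "K \<in> ball_of ` G" for K
      using that by (auto simp: ball_of_def)
    show "bounded (ball_of (SOME p. p \<in> G))" by (simp add: ball_of_def split: prod.split)
    show "ball_of (SOME p. p \<in> G) \<in> ball_of ` G" using False by (simp add: some_in_eq)
    show "\<Inter>\<F> \<noteq> {}" if \<F>: "finite \<F>" "\<F> \<subseteq> ball_of ` G" for \<F>
    proof -
      obtain F where F: "F \<subseteq> G" "finite F" "\<F> = ball_of ` F"
        using finite_subset_image[OF \<F>] by blast
      then obtain y where "\<forall>(a, v)\<in>F. inner (y - a) (y + v) \<le> 0"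
        using finite_monotone_set_common_point monotone_set_subset[OF assms] by blast
      then have "y \<in> \<Inter>\<F>"
        using F(3) mem_ball_of by auto
      then show ?thesis by blast
    qed
  qed
  then show ?thesis
    using mem_ball_of by blast
qed simp

section \<open>Resolvents of maximal monotone operators\<close>

lemma monotone_opD: "monotone_op A \<Longrightarrow> u \<in> A x \<Longrightarrow> v \<in> A y \<Longrightarrow> 0 \<le> inner (x - y) (u - v)"
  unfolding monotone_op_def by blast

lemma maximal_monotone_imp_monotone_op: "maximal_monotone A \<Longrightarrow> monotone_op A"
  by (simp add: maximal_monotone_def)

lemma maximal_monotone_memI:
  assumes "maximal_monotone A" and "\<And>x u. u \<in> A x \<Longrightarrow> 0 \<le> inner (y - x) (w - u)"
  shows "w \<in> A y"
proof -
  define B where "B x = (if x = y then insert w (A x) else A x)" for x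
  have "monotone_op B"
    unfolding monotone_op_def
  proof (intro allI impI)
    fix x1 x2 u1 u2 assume "u1 \<in> B x1" "u2 \<in> B x2"
    then consider "u1 \<in> A x1" "u2 \<in> A x2" | "x1 = y" "u1 = w" "u2 \<in> A x2"
      | "u1 \<in> A x1" "x2 = y" "u2 = w" | "x1 = y" "u1 = w" "x2 = y" "u2 = w"
      by (auto simp: B_def split: if_splits)
    then show "0 \<le> inner (x1 - x2) (u1 - u2)"
    proof cases
      case 1
      then show ?thesis
        using monotone_opD[OF maximal_monotone_imp_monotone_op[OF assms(1)]] by blast
    next
      case 3
      have "inner (x1 - x2) (u1 - u2) = inner (y - x1) (w - u1)"
        using 3 by (simp add: inner_diff_left inner_diff_right algebra_simps)
      then show ?thesis using assms(2)[OF 3(1)] by simp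
    qed (use assms(2) in auto)
  qed
  moreover have "A x \<subseteq> B x" for x
    by (auto simp: B_def)
  ultimately have "B = A"
    using assms(1) by (simp add: maximal_monotone_def)
  then show ?thesis
    by (metis B_def insertI1)
qed

lemma maximal_monotone_surj:
  fixes A :: "'a::{real_inner,complete_space} \<Rightarrow> 'a set"
  assumes "maximal_monotone A" and "0 < \<gamma>"
  shows "\<exists>y. \<exists>u\<in>A y. x = y + \<gamma> *\<^sub>R u"
proof -
  define G where "G = {(a, \<gamma> *\<^sub>R u - x) | a u. u \<in> A a}"
  have "monotone_set G"
  proof (unfold monotone_set_def, safe)
    fix a b a' b' assume "(a, b) \<in> G" "(a', b') \<in> G"
    then obtain u u' where "u \<in> A a" "b = \<gamma> *\<^sub>R u - x" "u' \<in> A a'" "b' = \<gamma> *\<^sub>R u' - x"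
      by (auto simp: G_def)
    then show "0 \<le> inner (a - a') (b - b')"
      using monotone_opD[OF maximal_monotone_imp_monotone_op[OF assms(1)], of u a u' a'] assms(2)
      by (simp flip: scaleR_diff_right)
  qed
  then obtain y where y: "\<forall>(a, v)\<in>G. inner (y - a) (y + v) \<le> 0"
    using monotone_set_common_point by blast
  define w where "w = (1 / \<gamma>) *\<^sub>R (x - y)"
  have "w \<in> A y"
  proof (rule maximal_monotone_memI[OF assms(1)])
    fix a u assume "u \<in> A a"
    then have "inner (y - a) (y + (\<gamma> *\<^sub>R u - x)) \<le> 0"
      using y by (force simp: G_def)
    moreover have "y + (\<gamma> *\<^sub>R u - x) = - \<gamma> *\<^sub>R (w - u)"
      using assms(2) by (simp add: w_def algebra_simps)
    ultimately show "0 \<le> inner (y - a) (w - u)"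
      using assms(2) by (simp add: zero_le_mult_iff)
  qed
  moreover have "x = y + \<gamma> *\<^sub>R w"
    using assms(2) by (simp add: w_def)
  ultimately show ?thesis by blast
qed

lemma resolvent_unique:
  assumes "monotone_op A" and "0 < \<gamma>"
    and "u1 \<in> A y1" "x = y1 + \<gamma> *\<^sub>R u1" and "u2 \<in> A y2" "x = y2 + \<gamma> *\<^sub>R u2"
  shows "y1 = y2"
proof -
  have d: "y1 - y2 = \<gamma> *\<^sub>R (u2 - u1)"
    using assms(4,6) by (simp add: algebra_simps)
  have "0 \<le> inner (y1 - y2) (u1 - u2)"
    using monotone_opD[OF assms(1,3,5)] .
  also have "\<dots> = - \<gamma> * (norm (u1 - u2))\<^sup>2"
    unfolding d power2_norm_eq_inner
    by (simp add: inner_diff_left inner_diff_right inner_commute algebra_simps)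
  finally have "u1 = u2"
    using assms(2) by (simp add: mult_le_0_iff)
  then show ?thesis
    using d by simp
qed

lemma resolventE:
  fixes A :: "'a::{real_inner,complete_space} \<Rightarrow> 'a set"
  assumes "maximal_monotone A" and "0 < \<gamma>"
  obtains u where "u \<in> A (resolvent \<gamma> A x)" "x = resolvent \<gamma> A x + \<gamma> *\<^sub>R u"
proof -
  have "\<exists>!y. \<exists>u\<in>A y. x = y + \<gamma> *\<^sub>R u"
    using maximal_monotone_surj[OF assms]
      resolvent_unique[OF maximal_monotone_imp_monotone_op[OF assms(1)] assms(2)]
    by blast
  then have "\<exists>u\<in>A (resolvent \<gamma> A x). x = resolvent \<gamma> A x + \<gamma> *\<^sub>R u"
    unfolding resolvent_def by (rule theI')
  then show ?thesis
    using that by blast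
qed

lemma resolvent_step_Fejer:
  assumes "monotone_op A" and "0 < \<gamma>" and "u \<in> A y" "x = y + \<gamma> *\<^sub>R u" and "0 \<in> A p"
  shows "(norm (y - p))\<^sup>2 + \<gamma>\<^sup>2 * (norm u)\<^sup>2 \<le> (norm (x - p))\<^sup>2"
proof -
  have "0 \<le> inner (y - p) u"
    using monotone_opD[OF assms(1,3,5)] by simp
  moreover have "(norm (x - p))\<^sup>2 = (norm (y - p))\<^sup>2 + 2 * \<gamma> * inner (y - p) u + \<gamma>\<^sup>2 * (norm u)\<^sup>2"
    unfolding assms(4) power2_norm_eq_inner
    by (simp add: inner_add_left inner_add_right inner_diff_left inner_diff_right inner_commute
        power2_eq_square algebra_simps)
  ultimately show ?thesis
    using assms(2) by simp
qed

lemma resolvent_step_norm_le: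
  assumes "monotone_op A" and "0 < \<gamma>" and "u \<in> A y" "x = y + \<gamma> *\<^sub>R u" and "v \<in> A x"
  shows "norm u \<le> norm v"
proof -
  have "0 \<le> inner (x - y) (v - u)"
    using monotone_opD[OF assms(1,5,3)] .
  then have "0 \<le> inner u (v - u)"
    using assms(2,4) by (simp add: zero_le_mult_iff)
  then have "norm u * norm u \<le> norm u * norm v"
    using Cauchy_Schwarz_ineq2[of u v]
    by (simp add: inner_diff_right power2_norm_eq_inner[symmetric] power2_eq_square)
  then show ?thesis
    by (cases "norm u = 0") (simp_all add: mult_le_cancel_left_pos)
qed

lemma resolvent_residual_le_dist:
  fixes A :: "'a::{real_inner,complete_space} \<Rightarrow> 'a set"
  assumes "maximal_monotone A" and "0 < \<gamma>" and "p \<in> zer A"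
  shows "norm (x - resolvent \<gamma> A x) \<le> norm (x - p)"
proof -
  obtain u where u: "u \<in> A (resolvent \<gamma> A x)" "x = resolvent \<gamma> A x + \<gamma> *\<^sub>R u"
    using resolventE[OF assms(1,2)] .
  have "(norm (x - resolvent \<gamma> A x))\<^sup>2 = \<gamma>\<^sup>2 * (norm u)\<^sup>2"
    using u(2) by (metis add_diff_cancel_left' norm_scaleR power_mult_distrib power2_abs)
  also have "\<dots> \<le> (norm (x - p))\<^sup>2"
    using resolvent_step_Fejer[OF maximal_monotone_imp_monotone_op[OF assms(1)] assms(2) u]
      assms(3) by (simp add: zer_def) (smt (verit) zero_le_power2)
  finally show ?thesis
    by (rule power2_le_imp_le) simp
qed

lemma resolvent_residual_le:
  fixes A :: "'a::{real_inner,complete_space} \<Rightarrow> 'a set"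
  assumes "maximal_monotone A" and "0 < \<gamma>" and "v \<in> A x"
  shows "norm (x - resolvent \<gamma> A x) \<le> \<gamma> * norm v"
proof -
  obtain u where u: "u \<in> A (resolvent \<gamma> A x)" "x = resolvent \<gamma> A x + \<gamma> *\<^sub>R u"
    using resolventE[OF assms(1,2)] .
  have "norm (x - resolvent \<gamma> A x) = \<gamma> * norm u"
    using u(2) assms(2) by (metis add_diff_cancel_left' norm_scaleR abs_of_pos)
  also have "\<dots> \<le> \<gamma> * norm v"
    using resolvent_step_norm_le[OF maximal_monotone_imp_monotone_op[OF assms(1)] assms(2) u
        assms(3)] assms(2)
    by simp
  finally show ?thesis .
qed

section \<open>The proximal point algorithm\<close>

lemma proximal_point_Fejer_sum:
  assumes "monotone_op A" and "\<And>n. 0 < \<gamma> n"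
    and "\<And>n. u n \<in> A (x (Suc n))" and "\<And>n. x n = x (Suc n) + \<gamma> n *\<^sub>R u n" and "0 \<in> A p"
  shows "(\<Sum>i\<le>n. (\<gamma> i)\<^sup>2 * (norm (u i))\<^sup>2) + (norm (x (Suc n) - p))\<^sup>2 \<le> (norm (x 0 - p))\<^sup>2"
proof (induction n)
  case 0
  show ?case
    using resolvent_step_Fejer[OF assms(1,2,3,4,5)] by (simp add: add.commute)
next
  case (Suc n)
  then show ?case
    using resolvent_step_Fejer[OF assms(1,2,3,4,5), of "Suc n"] by simp
qed

lemma proximal_point_norm_decseq:
  assumes "monotone_op A" and "\<And>n. 0 < \<gamma> n"
    and "\<And>n. u n \<in> A (x (Suc n))" and "\<And>n. x n = x (Suc n) + \<gamma> n *\<^sub>R u n"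
  shows "decseq (\<lambda>n. norm (u n))"
  using resolvent_step_norm_le[OF assms(1,2,3,4) assms(3)] by (intro decseq_SucI)

lemma proximal_point_residual_bound:
  fixes A :: "'a::{real_inner,complete_space} \<Rightarrow> 'a set"
  assumes "maximal_monotone A" and "\<And>n. 0 < \<gamma> n"
    and "\<And>n. x (Suc n) = resolvent (\<gamma> n) A (x n)" and "p \<in> zer A" and "0 < \<mu>"
  shows "(norm (x (Suc n) - resolvent \<mu> A (x (Suc n))))\<^sup>2 * (\<Sum>i\<le>n. (\<gamma> i)\<^sup>2)
    \<le> \<mu>\<^sup>2 * (norm (x 0 - p))\<^sup>2"
proof -
  have mono: "monotone_op A"
    using assms(1) by (rule maximal_monotone_imp_monotone_op)
  have "\<forall>n. \<exists>u. u \<in> A (x (Suc n)) \<and> x n = x (Suc n) + \<gamma> n *\<^sub>R u"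
    using resolventE[OF assms(1,2)] assms(3) by metis
  then obtain u where u: "\<And>n. u n \<in> A (x (Suc n))" "\<And>n. x n = x (Suc n) + \<gamma> n *\<^sub>R u n"
    by metis
  have "(norm (x (Suc n) - resolvent \<mu> A (x (Suc n))))\<^sup>2 \<le> (\<mu> * norm (u n))\<^sup>2"
    using resolvent_residual_le[OF assms(1,5) u(1)] by (rule power_mono) simp
  from mult_right_mono[OF this, of "\<Sum>i\<le>n. (\<gamma> i)\<^sup>2"]
  have "(norm (x (Suc n) - resolvent \<mu> A (x (Suc n))))\<^sup>2 * (\<Sum>i\<le>n. (\<gamma> i)\<^sup>2)
      \<le> \<mu>\<^sup>2 * ((\<Sum>i\<le>n. (\<gamma> i)\<^sup>2) * (norm (u n))\<^sup>2)"
    by (simp add: sum_nonneg power_mult_distrib mult_ac)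
  also have "\<dots> \<le> \<mu>\<^sup>2 * (\<Sum>i\<le>n. (\<gamma> i)\<^sup>2 * (norm (u i))\<^sup>2)"
    using decseqD[OF proximal_point_norm_decseq[of A \<gamma> u x, OF mono assms(2) u]]
    by (auto simp: sum_distrib_right intro!: mult_left_mono sum_mono power_mono)
  also have "\<dots> \<le> \<mu>\<^sup>2 * (norm (x 0 - p))\<^sup>2"
  proof -
    have "(\<Sum>i\<le>n. (\<gamma> i)\<^sup>2 * (norm (u i))\<^sup>2) + (norm (x (Suc n) - p))\<^sup>2 \<le> (norm (x 0 - p))\<^sup>2"
      using assms(4)
      by (intro proximal_point_Fejer_sum[of A \<gamma> u x, OF mono assms(2) u]) (simp add: zer_def)
    then have "(\<Sum>i\<le>n. (\<gamma> i)\<^sup>2 * (norm (u i))\<^sup>2) \<le> (norm (x 0 - p))\<^sup>2"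
      using zero_le_power2[of "norm (x (Suc n) - p)"] by linarith
    then show ?thesis
      by (rule mult_left_mono) simp
  qed
  finally show ?thesis .
qed

section \<open>The rate of asymptotic regularity\<close>

lemma m_seq_ge: "i \<le> k \<Longrightarrow> \<gamma> i \<le> m_seq \<gamma> k"
  unfolding m_seq_def by (intro Max_ge) auto

lemma m_seq_pos: "(\<And>n. 0 < \<gamma> n) \<Longrightarrow> 0 < m_seq \<gamma> k"
  using m_seq_ge[of 0 k \<gamma>] by (meson order_less_le_trans zero_le)

lemma M_seq_ge:
  assumes "0 \<le> m"
  shows "(real k + 1) * (2 + m) \<le> real (M_seq m k) + 1"
proof -
  have "0 < (real k + 1) * (2 + m)"
    using assms by (intro mult_pos_pos) auto
  then have "1 \<le> \<lceil>(real k + 1) * (2 + m)\<rceil>"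
    by (simp add: one_le_ceiling)
  then have "1 \<le> nat \<lceil>(real k + 1) * (2 + m)\<rceil>"
    by linarith
  then have "real (M_seq m k) + 1 = real (nat \<lceil>(real k + 1) * (2 + m)\<rceil>)"
    by (simp add: M_seq_def of_nat_diff)
  also have "\<dots> = of_int \<lceil>(real k + 1) * (2 + m)\<rceil>"
    using \<open>1 \<le> \<lceil>(real k + 1) * (2 + m)\<rceil>\<close> by simp
  also have "\<dots> \<ge> (real k + 1) * (2 + m)"
    by (rule le_of_int_ceiling)
  finally show ?thesis .
qed

lemma M_seq_ceiling_ge:
  assumes "0 \<le> m" and "0 \<le> b"
  shows "(b * ((real k + 1) * (2 + m)))\<^sup>2 \<le> real (nat \<lceil>b\<^sup>2 * (real (M_seq m k) + 1)\<^sup>2\<rceil>)"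
proof -
  have "b * ((real k + 1) * (2 + m)) \<le> b * (real (M_seq m k) + 1)"
    using M_seq_ge[OF assms(1)] assms(2) by (rule mult_left_mono)
  then have "(b * ((real k + 1) * (2 + m)))\<^sup>2 \<le> (b * (real (M_seq m k) + 1))\<^sup>2"
    using assms by (intro power_mono) auto
  also have "\<dots> \<le> real (nat \<lceil>b\<^sup>2 * (real (M_seq m k) + 1)\<^sup>2\<rceil>)"
    by (simp add: power_mult_distrib real_nat_ceiling_ge)
  finally show ?thesis .
qed

lemma rate_of_divergence_Phi_index:
  assumes "rate_of_divergence \<gamma> \<theta>" and "\<And>n. 0 < \<gamma> n" and "0 < b" and "1 < b * (real k + 1)"
  obtains t where "Suc t \<le> Phi k (m_seq \<gamma> k) \<theta> b"
    and "(b * ((real k + 1) * (2 + m_seq \<gamma> k)))\<^sup>2 \<le> (\<Sum>i\<le>t. (\<gamma> i)\<^sup>2)"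
proof -
  define m where "m = m_seq \<gamma> k"
  define c where "c = nat \<lceil>b\<^sup>2 * (real (M_seq m k) + 1)\<^sup>2\<rceil>"
  define t where "t = \<theta> c"
  have "0 < m"
    unfolding m_def using assms(2) by (rule m_seq_pos)
  have c_ge: "(b * ((real k + 1) * (2 + m)))\<^sup>2 \<le> real c"
    unfolding c_def using \<open>0 < m\<close> assms(3) by (intro M_seq_ceiling_ge) auto
  have "1 * (2 + m) < (b * (real k + 1)) * (2 + m)"
    using assms(4) \<open>0 < m\<close> by (intro mult_strict_right_mono) auto
  then have "(2 + m)\<^sup>2 < (b * ((real k + 1) * (2 + m)))\<^sup>2"
    using \<open>0 < m\<close> by (intro power_strict_mono) (auto simp: mult_ac)
  with c_ge have c_gt: "(2 + m)\<^sup>2 < real c"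
    by linarith
  have sum_ge: "real c \<le> (\<Sum>i\<le>t. (\<gamma> i)\<^sup>2)"
    using assms(1) by (simp add: rate_of_divergence_def t_def)
  have "1 \<le> t"
  proof (rule ccontr)
    assume "\<not> 1 \<le> t"
    then have "t = 0" by simp
    then have "real c \<le> (\<gamma> 0)\<^sup>2"
      using sum_ge by simp
    moreover have "(\<gamma> 0)\<^sup>2 \<le> (2 + m)\<^sup>2"
      using m_seq_ge[of 0 k \<gamma>] assms(2)[of 0] by (intro power_mono) (auto simp: m_def)
    ultimately show False
      using c_gt by linarith
  qed
  moreover have "(2::real)\<^sup>2 \<le> (2 + m)\<^sup>2"
    using \<open>0 < m\<close> by (intro power_mono) auto
  with c_gt have "4 < real c"
    by simp
  then have "t * 5 \<le> t * c"
    by (intro mult_le_mono2) linarith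
  ultimately have "Suc t \<le> t * c - 1"
    by linarith
  also have "\<dots> = Phi k m \<theta> b"
    by (simp add: Phi_def Let_def c_def t_def)
  finally have "Suc t \<le> Phi k m \<theta> b" .
  then show ?thesis
    using that c_ge sum_ge by (simp add: m_def)
qed

lemma le_inverse_of_sq_mult_le:
  fixes Y S m b K :: real
  assumes "Y\<^sup>2 * S \<le> m\<^sup>2 * b\<^sup>2" and "(b * (K * (2 + m)))\<^sup>2 \<le> S"
    and "0 < b" and "0 \<le> m" and "0 < K" and "0 \<le> Y"
  shows "Y \<le> 1 / K"
proof -
  have "(Y * (b * (K * (2 + m))))\<^sup>2 \<le> Y\<^sup>2 * S"
    unfolding power_mult_distrib[of Y] by (rule mult_left_mono[OF assms(2)]) simp
  also have "\<dots> \<le> (b * m)\<^sup>2"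
    using assms(1) by (simp add: power_mult_distrib mult.commute)
  finally have "b * (Y * K * (2 + m)) \<le> b * m"
    using assms(3,4) power2_le_imp_le[of "Y * (b * (K * (2 + m)))" "b * m"]
    by (simp add: mult_ac)
  then have "Y * K * (2 + m) < 1 * (2 + m)"
    using assms(3) by simp
  then have "Y * K < 1"
    by (rule mult_right_less_imp_less) (use assms(4) in simp)
  then show ?thesis
    using assms(5) by (simp add: field_simps)
qed

lemma proximal_point_mem_AF:
  fixes A :: "'a::{real_inner,complete_space} \<Rightarrow> 'a set"
  assumes "maximal_monotone A" and "\<And>n. 0 < \<gamma> n"
    and "\<And>n. x (Suc n) = resolvent (\<gamma> n) A (x n)" and "p \<in> zer A"
    and "0 < b" and "norm (x 0 - p) \<le> b"
    and "(b * ((real k + 1) * (2 + m_seq \<gamma> k)))\<^sup>2 \<le> (\<Sum>i\<le>t. (\<gamma> i)\<^sup>2)"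
  shows "x (Suc t) \<in> AF \<gamma> A k"
proof -
  have "norm (x (Suc t) - resolvent (\<gamma> i) A (x (Suc t))) \<le> 1 / (real k + 1)" if "i \<le> k" for i
  proof (rule le_inverse_of_sq_mult_le[OF _ assms(7)])
    have "(\<gamma> i)\<^sup>2 \<le> (m_seq \<gamma> k)\<^sup>2"
      using m_seq_ge[OF that] assms(2)[of i] by (intro power_mono) auto
    moreover have "(norm (x 0 - p))\<^sup>2 \<le> b\<^sup>2"
      using assms(6) by (intro power_mono) auto
    ultimately have "(\<gamma> i)\<^sup>2 * (norm (x 0 - p))\<^sup>2 \<le> (m_seq \<gamma> k)\<^sup>2 * b\<^sup>2"
      by (rule mult_mono) auto
    then show "(norm (x (Suc t) - resolvent (\<gamma> i) A (x (Suc t))))\<^sup>2 * (\<Sum>i\<le>t. (\<gamma> i)\<^sup>2)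
        \<le> (m_seq \<gamma> k)\<^sup>2 * b\<^sup>2"
      using proximal_point_residual_bound[of A \<gamma> x p "\<gamma> i" t, OF assms(1-4) assms(2)]
      by linarith
    show "0 \<le> m_seq \<gamma> k"
      using m_seq_pos[OF assms(2)] by (rule less_imp_le)
  qed (simp_all add: assms(5))
  then show ?thesis
    by (simp add: AF_def)
qed

theorem theorem8p4:
  fixes A :: "'a::{real_inner, complete_space} \<Rightarrow> 'a set"
    and \<gamma> :: "nat \<Rightarrow> real" and \<theta> :: "nat \<Rightarrow> nat"
    and x :: "nat \<Rightarrow> 'a" and b :: real and p :: 'a
  assumes "maximal_monotone A"
    and "zer A \<noteq> {}"
    and "\<And>n. \<gamma> n > 0"
    and "\<not> summable (\<lambda>n. (\<gamma> n)\<^sup>2)"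
    and "rate_of_divergence \<gamma> \<theta>"
    and "\<And>n. x (Suc n) = resolvent (\<gamma> n) A (x n)"
    and "b > 0" and "p \<in> zer A" and "norm (x 0 - p) \<le> b"
  shows "\<forall>k. \<exists>N \<le> Phi k (m_seq \<gamma> k) \<theta> b. x N \<in> AF \<gamma> A k"
proof
  fix k
  show "\<exists>N \<le> Phi k (m_seq \<gamma> k) \<theta> b. x N \<in> AF \<gamma> A k"
  proof (cases "b * (real k + 1) \<le> 1")
    case True
    then have "b \<le> 1 / (real k + 1)"
      by (simp add: field_simps)
    then have "x 0 \<in> AF \<gamma> A k"
      using resolvent_residual_le_dist[OF assms(1,3,8)] assms(9)
      unfolding AF_def by (blast intro: order_trans)
    then show ?thesis by blast
  next
    case False
    then obtain t where "Suc t \<le> Phi k (m_seq \<gamma> k) \<theta> b"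
      and "(b * ((real k + 1) * (2 + m_seq \<gamma> k)))\<^sup>2 \<le> (\<Sum>i\<le>t. (\<gamma> i)\<^sup>2)"
      using rate_of_divergence_Phi_index[OF assms(5,3,7), of k] by force
    then show ?thesis
      using proximal_point_mem_AF[OF assms(1,3,6,8,7,9)] by blast
  qed
qed

end
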